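(* Let $n,t\ge1$. Let $\nu$ be the distribution of the random diagonal unitary $U=\exp\!\big(\mathrm i\theta\bigotimes_{j=1}^nZ^{a_j}\big)$ where $a\in\{0,1\}^n$ is uniform and $\theta$ is uniform on $(0,2\pi]$, independently, and let $\nu_q$ be defined identically except that $\theta$ is uniform on $\{2\pi l/q\}_{l=0}^{q-1}$. Then $g_D(\nu,t)\le 1-\frac{1}{2t}$, and if $q>2t$ then also $g_D(\nu_q,t)\le1-\frac1{2t}$.
   Context: $Z^0=I$, $Z^1=Z$. $\mu_D$ denotes the Haar measure on diagonal $2^n\times2^n$ unitaries (independent uniform phases on the diagonal entries). For a distribution $\nu$ on diagonal unitaries, $g_D(\nu,t)=\big\|\mathbb E_{U\sim\nu}U^{\otimes t}\otimes\overline U^{\otimes t}-\mathbb E_{U\sim\mu_D}U^{\otimes t}\otimes\overline U^{\otimes t}\big\|_\infty$ (operator norm), where $\overline U$ is the entrywise complex conjugate. *)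

theory Defs
  imports "HOL-Probability.Probability"
begin

text \<open>Complex matrices are represented as functions  row index => column index => complex,
  together with an explicit finite index set.\<close>

type_synonym 'i cmat = "'i \<Rightarrow> 'i \<Rightarrow> complex"

text \<open>Computational basis of n qubits: bit strings of length n (the 2^n basis states).\<close>
definition qubits :: "nat \<Rightarrow> bool list set" where
  "qubits n = {x. length x = n}"

definition diag_mat :: "('i \<Rightarrow> complex) \<Rightarrow> 'i cmat" where
  "diag_mat d = (\<lambda>i j. if i = j then d i else 0)"

definition conj_mat :: "'i cmat \<Rightarrow> 'i cmat" where
  "conj_mat A = (\<lambda>i j. cnj (A i j))"

definition tensor_mat :: "'i cmat \<Rightarrow> 'j cmat \<Rightarrow> ('i \<times> 'j) cmat" where
  "tensor_mat A B = (\<lambda>(i1, i2) (j1, j2). A i1 j1 * B i2 j2)"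

definition tensor_pow :: "nat \<Rightarrow> 'i cmat \<Rightarrow> 'i list cmat" where
  "tensor_pow t A = (\<lambda>is js. \<Prod>k<t. A (is ! k) (js ! k))"

definition tidx :: "nat \<Rightarrow> 'i set \<Rightarrow> 'i list set" where
  "tidx t I = {is. length is = t \<and> set is \<subseteq> I}"

text \<open>Index set of  U^{\<otimes>t} \<otimes> conj(U)^{\<otimes>t}  for U a 2^n x 2^n matrix.\<close>
definition mom_idx :: "nat \<Rightarrow> nat \<Rightarrow> (bool list list \<times> bool list list) set" where
  "mom_idx n t = tidx t (qubits n) \<times> tidx t (qubits n)"

definition moment_op :: "nat \<Rightarrow> 'i cmat \<Rightarrow> ('i list \<times> 'i list) cmat" where
  "moment_op t U = tensor_mat (tensor_pow t U) (tensor_pow t (conj_mat U))"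

text \<open>E_{U ~ distr P f} U^{\<otimes>t} \<otimes> conj(U)^{\<otimes>t}, computed entrywise (Bochner integral),
  where the random unitary is  f p  with parameter p distributed according to P.\<close>
definition exp_moment :: "'p measure \<Rightarrow> ('p \<Rightarrow> 'i cmat) \<Rightarrow> nat \<Rightarrow> ('i list \<times> 'i list) cmat" where
  "exp_moment P f t = (\<lambda>r c. \<integral>p. moment_op t (f p) r c \<partial>P)"

definition vec_norm :: "'i set \<Rightarrow> ('i \<Rightarrow> complex) \<Rightarrow> real" where
  "vec_norm J v = sqrt (\<Sum>j\<in>J. (cmod (v j))\<^sup>2)"

definition mat_vec :: "'i set \<Rightarrow> 'i cmat \<Rightarrow> ('i \<Rightarrow> complex) \<Rightarrow> ('i \<Rightarrow> complex)" where
  "mat_vec J A v = (\<lambda>i. \<Sum>j\<in>J. A i j * v j)"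

definition op_norm :: "'i set \<Rightarrow> 'i cmat \<Rightarrow> real" where
  "op_norm J A = Sup {vec_norm J (mat_vec J A v) | v. vec_norm J v \<le> 1}"

text \<open>Haar measure on diagonal 2^n x 2^n unitaries: independent uniform phases.\<close>
definition haar_diag_params :: "nat \<Rightarrow> (bool list \<Rightarrow> real) measure" where
  "haar_diag_params n = PiM (qubits n) (\<lambda>_. uniform_measure lborel {0..2*pi})"

definition haar_diag_unitary :: "(bool list \<Rightarrow> real) \<Rightarrow> bool list cmat" where
  "haar_diag_unitary \<phi> = diag_mat (\<lambda>x. cis (\<phi> x))"

text \<open>g_D(nu, t) for nu the pushforward of P under f.\<close>
definition gD :: "nat \<Rightarrow> 'p measure \<Rightarrow> ('p \<Rightarrow> bool list cmat) \<Rightarrow> nat \<Rightarrow> real" where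
  "gD n P f t = op_norm (mom_idx n t)
     (\<lambda>r c. exp_moment P f t r c - exp_moment (haar_diag_params n) haar_diag_unitary t r c)"

text \<open>Diagonal of the Pauli string Z^{a_1} \<otimes> ... \<otimes> Z^{a_n} (Z = diag(1,-1)) at basis state x.\<close>
definition zstring_diag :: "bool list \<Rightarrow> bool list \<Rightarrow> real" where
  "zstring_diag a x = (\<Prod>j<length a. if a ! j \<and> x ! j then -1 else 1)"

text \<open>exp(i \<theta> Z^{a}) for the diagonal Hermitian Z^{a}: diagonal with entries exp(i \<theta> d_x).\<close>
definition zphase_unitary :: "bool list \<times> real \<Rightarrow> bool list cmat" where
  "zphase_unitary = (\<lambda>(a, \<theta>). diag_mat (\<lambda>x. cis (\<theta> * zstring_diag a x)))"

definition nu_params :: "nat \<Rightarrow> (bool list \<times> real) measure" where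
  "nu_params n = uniform_count_measure (qubits n) \<Otimes>\<^sub>M uniform_measure lborel {0<..2*pi}"

definition nuq_params :: "nat \<Rightarrow> nat \<Rightarrow> (bool list \<times> real) measure" where
  "nuq_params n q = uniform_count_measure (qubits n) \<Otimes>\<^sub>M
      uniform_count_measure ((\<lambda>l. 2 * pi * real l / real q) ` {0..<q})"

end

theory Submission
  imports Defs "HOL-Library.Real_Mod"
begin

text \<open>
  Both moment operators are diagonal in the index (u, w) of \<open>U\<^sup>\<otimes>\<^sup>t \<otimes> conj(U)\<^sup>\<otimes>\<^sup>t\<close>.
  For \<open>U = exp(i\<theta>Z\<^sup>a)\<close> the diagonal entry is \<open>cis(\<theta> m\<^sub>a)\<close> with the integer
  \<open>m\<^sub>a = \<Sum>\<^sub>k Z\<^sup>a(u\<^sub>k) - \<Sum>\<^sub>k Z\<^sup>a(w\<^sub>k)\<close> of modulus at most 2t, so averaging over \<theta>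
  (uniform on the circle, or on the q-th roots of unity with q > 2t) leaves the probability
  that \<open>m\<^sub>a = 0\<close>. For Haar random diagonal phases the entry is 1 if u and w are permutations
  of each other and 0 otherwise; in the first case \<open>m\<^sub>a = 0\<close> for every a, so the entries agree.
  Otherwise \<open>m\<^sub>a = \<Sum>\<^sub>x c\<^sub>x Z\<^sup>a(x)\<close> with a nonzero integer vector c, and orthogonality
  of the characters \<open>a \<mapsto> Z\<^sup>a(x)\<close> of \<open>{0,1}\<^sup>n\<close> gives
  \<open>2\<^sup>n |c\<^sub>y| = |\<Sum>\<^sub>a m\<^sub>a Z\<^sup>a(y)| \<le> 2t \<cdot> #{a. m\<^sub>a \<noteq> 0}\<close> for any y with \<open>c\<^sub>y \<noteq> 0\<close>,
  so \<open>m\<^sub>a \<noteq> 0\<close> with probability at least 1/(2t). The operator norm of the diagonal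
  difference is its largest entry.
\<close>

lemma finite_qubits: "finite (qubits n)"
  using finite_lists_length_eq[of "UNIV :: bool set" n] by (simp add: qubits_def)

lemma qubits_nonempty: "qubits n \<noteq> {}"
  by (auto simp: qubits_def intro!: exI[of _ "replicate n False"])

lemma finite_tidx: "finite I \<Longrightarrow> finite (tidx t I)"
  using finite_lists_length_eq[of I t] by (simp add: tidx_def conj_commute)

lemma sum_list_map_eq_sum_count_list:
  fixes f :: "'a \<Rightarrow> 'b::comm_semiring_1"
  assumes "set xs \<subseteq> X" "finite X"
  shows "(\<Sum>x\<leftarrow>xs. f x) = (\<Sum>x\<in>X. of_nat (count_list xs x) * f x)"
  using assms(1)
proof (induction xs)
  case (Cons b xs)
  have "(\<Sum>x\<in>X. of_nat (count_list (b # xs) x) * f x)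
      = (\<Sum>x\<in>X. of_nat (count_list xs x) * f x) + (\<Sum>x\<in>X. if x = b then f x else 0)"
    unfolding sum.distrib[symmetric] by (intro sum.cong) (auto simp: algebra_simps)
  also have "(\<Sum>x\<in>X. if x = b then f x else 0) = f b"
    using Cons.prems assms(2) by (simp add: sum.delta')
  finally show ?case using Cons by (simp add: add.commute)
qed simp

lemma cis_sum: "finite A \<Longrightarrow> cis (sum f A) = (\<Prod>x\<in>A. cis (f x))"
  by (induction A rule: finite_induct) (auto simp flip: cis_mult)

lemma op_norm_diag_le:
  assumes fin: "finite J" and b: "0 \<le> b"
    and off: "\<And>r c. r \<in> J \<Longrightarrow> c \<in> J \<Longrightarrow> r \<noteq> c \<Longrightarrow> A r c = 0"
    and diag: "\<And>r. r \<in> J \<Longrightarrow> cmod (A r r) \<le> b"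
  shows "op_norm J A \<le> b"
proof -
  have mat_vec: "mat_vec J A v r = A r r * v r" if "r \<in> J" for v r
  proof -
    have "mat_vec J A v r = A r r * v r + (\<Sum>c\<in>J-{r}. A r c * v c)"
      unfolding mat_vec_def using that fin by (simp add: sum.remove)
    also have "(\<Sum>c\<in>J-{r}. A r c * v c) = 0"
      using that off by (intro sum.neutral) auto
    finally show ?thesis by simp
  qed
  have bound: "vec_norm J (mat_vec J A v) \<le> b" if v: "vec_norm J v \<le> 1" for v
  proof -
    have "vec_norm J (mat_vec J A v) = sqrt (\<Sum>r\<in>J. (cmod (A r r * v r))\<^sup>2)"
      by (simp add: vec_norm_def mat_vec)
    also have "\<dots> \<le> sqrt (\<Sum>r\<in>J. b\<^sup>2 * (cmod (v r))\<^sup>2)"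
      by (intro real_sqrt_le_mono sum_mono)
        (auto simp: norm_mult power_mult_distrib intro!: mult_right_mono power_mono diag)
    also have "\<dots> = b * vec_norm J v"
      by (simp add: vec_norm_def sum_distrib_left[symmetric] real_sqrt_mult b)
    also have "\<dots> \<le> b"
      using v b by (simp add: mult_left_le)
    finally show ?thesis .
  qed
  have "{vec_norm J (mat_vec J A v) | v. vec_norm J v \<le> 1} \<noteq> {}"
    by (rule ccontr) (auto simp: vec_norm_def elim: allE[of _ "\<lambda>_. 0"])
  then show ?thesis
    unfolding op_norm_def by (rule cSup_least) (auto intro: bound)
qed

subsection \<open>Z-strings as characters of the Boolean cube\<close>

lemma zstring_diag_square: "zstring_diag a x * zstring_diag a x = 1"
  unfolding zstring_diag_def prod.distrib[symmetric] by (intro prod.neutral) auto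

lemma abs_zstring_diag: "\<bar>zstring_diag a x\<bar> = 1"
  unfolding zstring_diag_def abs_prod by (intro prod.neutral) auto

lemma zstring_diag_Ints: "zstring_diag a x \<in> \<int>"
  unfolding zstring_diag_def by (intro Ints_prod) auto

lemma sum_zstring_diag_mult:
  assumes x: "x \<in> qubits n" and y: "y \<in> qubits n"
  shows "(\<Sum>a\<in>qubits n. zstring_diag a x * zstring_diag a y) = (if x = y then real (card (qubits n)) else 0)"
proof (cases "x = y")
  case True
  then show ?thesis by (simp add: zstring_diag_square)
next
  case False
  then obtain j where j: "j < n" "x ! j \<noteq> y ! j"
    using x y nth_equalityI[of x y] by (auto simp: qubits_def)
  define flip where "flip a = a[j := \<not> a ! j]" for a :: "bool list"
  define g where "g a = zstring_diag a x * zstring_diag a y" for a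
  define h where "h i a = (if a ! i \<and> x ! i then -1 else 1) * (if a ! i \<and> y ! i then -1 else (1::real))" for i a
  have g_prod: "g a = h j a * (\<Prod>i\<in>{..<n}-{j}. h i a)" if "a \<in> qubits n" for a
    using that j unfolding g_def h_def zstring_diag_def qubits_def by (simp add: prod.distrib prod.remove)
  have flip_in: "flip a \<in> qubits n" if "a \<in> qubits n" for a
    using that by (simp add: flip_def qubits_def)
  have g_flip: "g (flip a) = - g a" if a: "a \<in> qubits n" for a
  proof -
    have "h j (flip a) = - h j a" and "\<And>i. i \<noteq> j \<Longrightarrow> h i (flip a) = h i a"
      using a j by (cases "x ! j"; cases "a ! j"; auto simp: h_def flip_def qubits_def)+
    then show ?thesis using g_prod[OF a] g_prod[OF flip_in[OF a]] by simp
  qed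
  \<comment> \<open>flipping bit j is an involution of the cube that reverses the sign of g\<close>
  have "(\<Sum>a\<in>qubits n. g a) = (\<Sum>a\<in>qubits n. g (flip a))"
    by (rule sum.reindex_bij_witness[where i=flip and j=flip]) (auto simp: flip_def qubits_def j)
  also have "\<dots> = - (\<Sum>a\<in>qubits n. g a)"
    by (simp add: g_flip sum_negf)
  finally show ?thesis using False by (simp add: g_def)
qed

subsection \<open>The charge of a diagonal entry\<close>

definition count_diff :: "'a list \<Rightarrow> 'a list \<Rightarrow> 'a \<Rightarrow> real" where
  "count_diff u w x = real (count_list u x) - real (count_list w x)"

text \<open>\<open>cis (\<theta> * zcharge a u w)\<close> is the entry of \<open>U\<^sup>\<otimes>\<^sup>t \<otimes> conj(U)\<^sup>\<otimes>\<^sup>t\<close> at \<open>(u, w)\<close> for \<open>U = exp(i\<theta>Z\<^sup>a)\<close>.\<close>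
definition zcharge :: "bool list \<Rightarrow> bool list list \<Rightarrow> bool list list \<Rightarrow> real" where
  "zcharge a u w = (\<Sum>x\<leftarrow>u. zstring_diag a x) - (\<Sum>x\<leftarrow>w. zstring_diag a x)"

lemma zcharge_eq_sum_count_diff:
  assumes "set u \<subseteq> X" "set w \<subseteq> X" "finite X"
  shows "zcharge a u w = (\<Sum>x\<in>X. count_diff u w x * zstring_diag a x)"
  using assms by (simp add: zcharge_def count_diff_def sum_list_map_eq_sum_count_list
      left_diff_distrib sum_subtractf)

lemma abs_zcharge_le: "\<bar>zcharge a u w\<bar> \<le> real (length u + length w)"
proof -
  have "\<bar>\<Sum>x\<leftarrow>xs. zstring_diag a x\<bar> \<le> real (length xs)" for xs
    using sum_list_abs[of "map (zstring_diag a) xs"] by (simp add: o_def abs_zstring_diag sum_list_triv)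
  then show ?thesis
    unfolding zcharge_def of_nat_add by (meson abs_triangle_ineq4 add_mono order_trans)
qed

lemma zcharge_Ints: "zcharge a u w \<in> \<int>"
  using zcharge_eq_sum_count_diff[of u "set u \<union> set w" w a]
  by (simp add: count_diff_def zstring_diag_Ints Ints_sum Ints_mult Ints_diff)

lemma zcharge_eq_0_if_mset_eq: "mset u = mset w \<Longrightarrow> zcharge a u w = 0"
  unfolding zcharge_def by (metis mset_map sum_mset_sum_list diff_self)

lemma card_qubits_le_zcharge_support:
  assumes u: "set u \<subseteq> qubits n" and w: "set w \<subseteq> qubits n" and neq: "mset u \<noteq> mset w"
  shows "real (card (qubits n)) \<le> real (length u + length w) * card {a\<in>qubits n. zcharge a u w \<noteq> 0}"
proof -
  let ?Q = "qubits n" and ?B = "real (length u + length w)"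
  obtain y where "count_list u y \<noteq> count_list w y"
    using neq by (auto simp: multiset_eq_iff count_mset)
  then have y: "y \<in> ?Q" and cy: "1 \<le> \<bar>count_diff u w y\<bar>"
    using u w by (auto simp: count_diff_def) (metis count_list_0_iff subsetD)
  have "(\<Sum>a\<in>?Q. zcharge a u w * zstring_diag a y)
      = (\<Sum>a\<in>?Q. \<Sum>x\<in>?Q. count_diff u w x * (zstring_diag a x * zstring_diag a y))"
    by (simp add: zcharge_eq_sum_count_diff[OF u w finite_qubits] sum_distrib_right mult.assoc)
  also have "\<dots> = (\<Sum>x\<in>?Q. count_diff u w x * (\<Sum>a\<in>?Q. zstring_diag a x * zstring_diag a y))"
    by (subst sum.swap) (simp add: sum_distrib_left)
  also have "\<dots> = (\<Sum>x\<in>?Q. if x = y then count_diff u w x * card ?Q else 0)"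
    by (intro sum.cong) (auto simp: sum_zstring_diag_mult y)
  also have "\<dots> = count_diff u w y * card ?Q"
    using y finite_qubits by simp
  finally have fourier: "(\<Sum>a\<in>?Q. zcharge a u w * zstring_diag a y) = count_diff u w y * card ?Q" .
  have "real (card ?Q) \<le> \<bar>count_diff u w y\<bar> * card ?Q"
    using cy by (simp add: mult_le_cancel_right1)
  also have "\<dots> = \<bar>\<Sum>a\<in>?Q. zcharge a u w * zstring_diag a y\<bar>"
    by (simp add: fourier abs_mult)
  also have "\<dots> \<le> (\<Sum>a\<in>?Q. \<bar>zcharge a u w\<bar>)"
    using sum_abs[of "\<lambda>a. zcharge a u w * zstring_diag a y" ?Q] by (simp add: abs_mult abs_zstring_diag)
  also have "\<dots> \<le> (\<Sum>a\<in>?Q. if zcharge a u w \<noteq> 0 then ?B else 0)"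
    using abs_zcharge_le[of _ u w] by (intro sum_mono) auto
  also have "\<dots> = ?B * card {a\<in>?Q. zcharge a u w \<noteq> 0}"
    using finite_qubits by (simp add: sum.If_cases Int_def)
  finally show ?thesis .
qed

lemma zcharge_vanishing_fraction_le:
  assumes u: "set u \<subseteq> qubits n" and w: "set w \<subseteq> qubits n" and neq: "mset u \<noteq> mset w"
  shows "card {a\<in>qubits n. zcharge a u w = 0} / card (qubits n) \<le> 1 - 1 / real (length u + length w)"
proof -
  let ?Q = "qubits n" and ?B = "real (length u + length w)"
  let ?Z = "{a\<in>?Q. zcharge a u w = 0}" and ?N = "{a\<in>?Q. zcharge a u w \<noteq> 0}"
  have Q_pos: "0 < real (card ?Q)"
    using finite_qubits qubits_nonempty by (simp add: card_gt_0_iff)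
  have B_pos: "0 < ?B"
    using neq by (cases u; cases w) auto
  have "card ?Z + card ?N = card ?Q"
    using finite_qubits by (subst card_Un_disjoint[symmetric]) (auto intro: arg_cong[where f=card])
  then have "real (card ?Z) + real (card ?N) = real (card ?Q)"
    by (simp only: of_nat_add[symmetric])
  moreover have "1 / ?B \<le> card ?N / card ?Q"
    using card_qubits_le_zcharge_support[OF u w neq] Q_pos B_pos
    by (simp add: le_divide_eq divide_le_eq mult.commute)
  moreover have "Z / Q \<le> 1 - 1 / B" if "0 < Q" "Z + N = Q" "1 / B \<le> N / Q" for Z N Q B :: real
  proof -
    have "Z / Q = 1 - N / Q"
      using that by (simp add: field_simps)
    then show ?thesis
      using that by linarith
  qed
  ultimately show ?thesis
    using Q_pos by blast
qed

lemma mset_eq_iff_count_diff_eq_0: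
  assumes "set u \<subseteq> X" "set w \<subseteq> X"
  shows "mset u = mset w \<longleftrightarrow> (\<forall>x\<in>X. count_diff u w x = 0)"
  using assms by (auto simp: multiset_eq_iff count_mset count_diff_def) (metis count_list_0_iff subsetD)

lemma moment_op_diag_cis:
  assumes "length u = t" "length w = t" "length u' = t" "length w' = t"
  shows "moment_op t (diag_mat (\<lambda>x. cis (f x))) (u, w) (u', w') =
    (if (u, w) = (u', w') then cis ((\<Sum>x\<leftarrow>u. f x) - (\<Sum>x\<leftarrow>w. f x)) else 0)"
proof (cases "(u, w) = (u', w')")
  case True
  have "(\<Sum>k<t. g (xs ! k)) = (\<Sum>x\<leftarrow>xs. g x)" if "length xs = t" for g :: "'a \<Rightarrow> real" and xs
    using that by (simp add: sum_list_sum_nth atLeast0LessThan)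
  then show ?thesis
    using True assms by (simp add: moment_op_def tensor_mat_def tensor_pow_def diag_mat_def
        conj_mat_def cis_cnj cis_sum[symmetric] sum_negf cis_mult)
next
  case False
  then obtain k where "k < t" "u ! k \<noteq> u' ! k \<or> w ! k \<noteq> w' ! k"
    using assms nth_equalityI[of u u'] nth_equalityI[of w w'] by auto
  then show ?thesis
    using False by (auto simp: moment_op_def tensor_mat_def tensor_pow_def diag_mat_def conj_mat_def
        intro!: prod_zero bexI[of _ k])
qed

lemma moment_op_zphase_unitary:
  assumes "length u = t" "length w = t" "length u' = t" "length w' = t"
  shows "moment_op t (zphase_unitary p) (u, w) (u', w') =
    (if (u, w) = (u', w') then cis (snd p * zcharge (fst p) u w) else 0)"
  using moment_op_diag_cis[OF assms]
  by (simp add: zphase_unitary_def case_prod_unfold zcharge_def sum_list_const_mult right_diff_distrib)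

lemma moment_op_haar_diag_unitary:
  assumes "set u \<subseteq> qubits n" "set w \<subseteq> qubits n"
    and "length u = t" "length w = t" "length u' = t" "length w' = t"
  shows "moment_op t (haar_diag_unitary \<phi>) (u, w) (u', w') =
    (if (u, w) = (u', w') then (\<Prod>x\<in>qubits n. cis (\<phi> x * count_diff u w x)) else 0)"
proof -
  have "(\<Sum>x\<leftarrow>u. \<phi> x) - (\<Sum>x\<leftarrow>w. \<phi> x) = (\<Sum>x\<in>qubits n. \<phi> x * count_diff u w x)"
    using assms(1,2) finite_qubits
    by (simp add: sum_list_map_eq_sum_count_list count_diff_def algebra_simps sum_subtractf)
  then have "cis ((\<Sum>x\<leftarrow>u. \<phi> x) - (\<Sum>x\<leftarrow>w. \<phi> x)) = (\<Prod>x\<in>qubits n. cis (\<phi> x * count_diff u w x))"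
    by (simp add: cis_sum finite_qubits)
  then show ?thesis
    unfolding haar_diag_unitary_def moment_op_diag_cis[OF assms(3-)] by (simp only:)
qed

subsection \<open>Phase distributions with the low Fourier coefficients of the circle\<close>

text \<open>\<open>\<Theta>\<close> has the Fourier coefficients of the uniform distribution on the circle up to degree k.\<close>
definition circle_design :: "real measure \<Rightarrow> nat \<Rightarrow> bool" where
  "circle_design \<Theta> k \<longleftrightarrow> prob_space \<Theta> \<and> (\<forall>c. (\<lambda>\<theta>. cis (\<theta> * c)) \<in> borel_measurable \<Theta>) \<and>
     (\<forall>c\<in>\<int>. \<bar>c\<bar> \<le> k \<longrightarrow> (\<integral>\<theta>. cis (\<theta> * c) \<partial>\<Theta>) = (if c = 0 then 1 else 0))"

lemma interval_integral_cis_mult: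
  fixes m :: real
  assumes "m \<in> \<int>" "m \<noteq> 0"
  shows "(LBINT x=0..2*pi. cis (x * m)) = 0"
proof -
  have "((\<lambda>x. cis (x * m)) has_vector_derivative \<i> * m * cis (x * m)) (at x within S)" for x S
  proof -
    have "((\<lambda>x. cis (x * m)) has_derivative (\<lambda>h. (h * m) *\<^sub>R (\<i> * cis (x * m)))) (at x within S)"
      by (auto intro!: derivative_eq_intros)
    then show ?thesis
      unfolding has_vector_derivative_def by (simp add: scaleR_conv_of_real algebra_simps)
  qed
  from has_vector_derivative_divide[OF this, of "\<i> * m"]
  have "(LBINT x=ereal 0..ereal (2*pi). cis (x * m)) = cis (2*pi*m) / (\<i> * m) - cis (0 * m) / (\<i> * m)"
    using assms(2) by (intro interval_integral_FTC_finite) (auto intro!: continuous_intros)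
  moreover have "cis (2*pi*m) = 1"
    using assms(1) by (metis Ints_cases cis_multiple_2pi mult.commute)
  ultimately show ?thesis
    by (simp add: zero_ereal_def)
qed

lemma integral_uniform_measure_lborel:
  fixes f :: "real \<Rightarrow> complex"
  assumes S: "S \<in> sets lborel" and L: "emeasure lborel S = ennreal L" "L > 0"
    and f: "f \<in> borel_measurable lborel"
  shows "(\<integral>x. f x \<partial>uniform_measure lborel S) = (1 / L) *\<^sub>R (LINT x:S|lborel. f x)"
proof -
  have "uniform_measure lborel S = density lborel (\<lambda>x. ennreal (indicator S x / L))"
    unfolding uniform_measure_def L
    by (intro arg_cong[where f="density lborel"] ext)
      (auto simp: L split: split_indicator intro: divide_ennreal[of 1 L, simplified])
  then have "(\<integral>x. f x \<partial>uniform_measure lborel S) = (\<integral>x. (indicator S x / L) *\<^sub>R f x \<partial>lborel)"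
    using S f L by (simp only:) (rule integral_density, auto)
  also have "\<dots> = (\<integral>x. (1 / L) *\<^sub>R (indicator S x *\<^sub>R f x) \<partial>lborel)"
    by (simp add: divide_inverse mult.commute)
  finally show ?thesis
    by (simp only: integral_scaleR_right set_lebesgue_integral_def)
qed

lemma integral_cis_uniform_Icc:
  fixes m :: real
  assumes m: "m \<in> \<int>"
  shows "(\<integral>\<theta>. cis (\<theta> * m) \<partial>uniform_measure lborel {0..2*pi}) = (if m = 0 then 1 else 0)"
proof (cases "m = 0")
  case True
  have "prob_space (uniform_measure lborel {0..2*pi})"
    by (intro prob_space_uniform_measure) auto
  then show ?thesis
    using True by (simp add: prob_space.prob_space)
next
  case False
  have "(LINT x:{0..2*pi}|lborel. cis (x * m)) = (LBINT x=0..2*pi. cis (x * m))"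
    by (simp add: interval_integral_Icc zero_ereal_def)
  then show ?thesis
    using False interval_integral_cis_mult[OF m False]
    by (subst integral_uniform_measure_lborel[where L="2*pi"])
      (auto intro!: borel_measurable_continuous_onI continuous_intros)
qed

lemma circle_design_uniform_Icc: "circle_design (uniform_measure lborel {0..2*pi}) k"
  unfolding circle_design_def
proof (intro conjI allI ballI impI integral_cis_uniform_Icc)
  show "prob_space (uniform_measure lborel {0..2*pi})"
    by (intro prob_space_uniform_measure) auto
  show "(\<lambda>\<theta>. cis (\<theta> * c)) \<in> borel_measurable (uniform_measure lborel {0..2*pi})" for c
    by (subst measurable_cong_sets[of _ borel]) (auto intro!: borel_measurable_continuous_onI continuous_intros)
qed

lemma uniform_measure_lborel_Ioc_eq_Icc:
  "uniform_measure lborel {a<..b} = uniform_measure lborel {a..b::real}"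
proof (cases "a \<le> b")
  case True
  then show ?thesis
    unfolding uniform_measure_def
    by (intro density_cong) (auto intro: AE_mp[OF AE_lborel_singleton[of a]] split: split_indicator)
qed simp

lemma circle_design_uniform_Ioc: "circle_design (uniform_measure lborel {0<..2*pi}) k"
  using circle_design_uniform_Icc by (simp add: uniform_measure_lborel_Ioc_eq_Icc)

lemma integral_uniform_count_measure_eq_average:
  fixes f :: "'a \<Rightarrow> 'b::{banach, second_countable_topology}"
  assumes "finite A"
  shows "integral\<^sup>L (uniform_count_measure A) f = (1 / card A) *\<^sub>R (\<Sum>x\<in>A. f x)"
  using assms by (simp add: uniform_count_measure_def lebesgue_integral_point_measure_finite scaleR_sum_right)

lemma circle_design_roots_of_unity:
  assumes q: "k < q"
  shows "circle_design (uniform_count_measure ((\<lambda>l. 2*pi*real l/real q) ` {0..<q})) k"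
  unfolding circle_design_def
proof (intro conjI allI ballI impI)
  let ?g = "\<lambda>l::nat. 2*pi*real l/real q"
  have q_pos: "0 < q" "0 < real q"
    using q by simp_all
  have inj: "inj_on ?g {..<q}"
    using q_pos by (auto simp: inj_on_def)
  show "prob_space (uniform_count_measure (?g ` {0..<q}))"
    using q_pos by (intro prob_space_uniform_count_measure) auto
  show "(\<lambda>\<theta>. cis (\<theta> * c)) \<in> borel_measurable (uniform_count_measure (?g ` {0..<q}))" for c
    by (subst measurable_cong_sets[of _ "count_space (?g ` {0..<q})"]) (auto simp: sets_uniform_count_measure)
  fix m :: real assume m: "m \<in> \<int>" "\<bar>m\<bar> \<le> k"
  let ?z = "cis (2*pi*m/q)"
  have "(\<integral>x. cis (x*m) \<partial>uniform_count_measure (?g ` {0..<q})) = (\<Sum>l<q. cis (?g l * m)) / q"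
    by (simp add: integral_uniform_count_measure_eq_average sum.reindex[OF inj] card_image[OF inj]
        atLeast0LessThan scaleR_conv_of_real)
  also have "(\<Sum>l<q. cis (?g l * m)) = (\<Sum>l<q. ?z ^ l)"
    by (intro sum.cong refl) (simp only: Complex.DeMoivre, simp add: field_simps)
  also have "\<dots> = (if m = 0 then of_nat q else 0)"
  proof (cases "m = 0")
    case False
    obtain c :: int where c: "m = of_int c"
      using m(1) by (auto elim: Ints_cases)
    have "\<bar>real_of_int c\<bar> < real q"
      using m(2) q c by linarith
    then have c_bounds: "c \<noteq> 0" "\<bar>c\<bar> < int q"
      using False c by linarith+
    \<comment> \<open>\<open>?z\<close> is a q-th root of unity, different from 1 because \<open>0 < |m| < q\<close>\<close>
    have "?z \<noteq> 1"
    proof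
      assume "?z = 1"
      then obtain j :: int where "2*pi*m/q = of_int j * (2*pi)"
        by (auto simp: cis_eq_1_iff)
      then have "real_of_int c = real_of_int (j * int q)"
        using q_pos c by (simp add: field_simps)
      then have "c = j * int q"
        by (simp only: of_int_eq_iff)
      then have "int q \<le> \<bar>c\<bar>"
        using c_bounds(1) by (simp add: abs_mult mult_le_cancel_right1) arith
      then show False
        using c_bounds(2) by simp
    qed
    moreover have "?z ^ q = cis (2 * pi * m)"
      using q_pos by (simp add: Complex.DeMoivre)
    moreover have "cis (2 * pi * m) = 1"
      using m(1) by simp
    ultimately show ?thesis
      using False by (simp add: sum_gp_strict)
  qed simp
  finally show "(\<integral>x. cis (x*m) \<partial>uniform_count_measure (?g ` {0..<q})) = (if m = 0 then 1 else 0)"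
    using q_pos by simp
qed

lemma exp_moment_zphase_unitary:
  assumes \<Theta>: "circle_design \<Theta> (2 * t)"
    and lengths: "length u = t" "length w = t" "length u' = t" "length w' = t"
  shows "exp_moment (uniform_count_measure (qubits n) \<Otimes>\<^sub>M \<Theta>) zphase_unitary t (u, w) (u', w') =
    (if (u, w) = (u', w') then of_real (card {a\<in>qubits n. zcharge a u w = 0} / card (qubits n)) else 0)"
proof (cases "(u, w) = (u', w')")
  case False
  then show ?thesis
    unfolding exp_moment_def moment_op_zphase_unitary[OF lengths] if_not_P[OF False] by simp
next
  case True
  let ?Q = "qubits n" and ?A = "uniform_count_measure (qubits n)"
  have P: "prob_space \<Theta>" and meas: "\<And>c. (\<lambda>\<theta>. cis (\<theta> * c)) \<in> borel_measurable \<Theta>"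
    and int: "\<And>c. c \<in> \<int> \<Longrightarrow> \<bar>c\<bar> \<le> real (2 * t) \<Longrightarrow> (\<integral>\<theta>. cis (\<theta> * c) \<partial>\<Theta>) = (if c = 0 then 1 else 0)"
    using \<Theta> by (auto simp: circle_design_def)
  interpret A: prob_space ?A
    by (rule prob_space_uniform_count_measure[OF finite_qubits qubits_nonempty])
  interpret T: prob_space \<Theta> by (rule P)
  interpret pair_prob_space ?A \<Theta> by unfold_locales
  let ?f = "\<lambda>p::bool list \<times> real. cis (snd p * zcharge (fst p) u w)"
  have "?f \<in> borel_measurable (count_space ?Q \<Otimes>\<^sub>M \<Theta>)"
    by (rule measurable_pair_measure_countable1) (auto intro: countable_finite finite_qubits meas)
  moreover have "sets (?A \<Otimes>\<^sub>M \<Theta>) = sets (count_space ?Q \<Otimes>\<^sub>M \<Theta>)"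
    by (intro sets_pair_measure_cong) (auto simp: sets_uniform_count_measure)
  ultimately have "?f \<in> borel_measurable (?A \<Otimes>\<^sub>M \<Theta>)"
    using measurable_cong_sets by blast
  then have "integrable (?A \<Otimes>\<^sub>M \<Theta>) ?f"
    by (intro P.integrable_const_bound[where B=1]) auto
  have "exp_moment (?A \<Otimes>\<^sub>M \<Theta>) zphase_unitary t (u, w) (u', w') = integral\<^sup>L (?A \<Otimes>\<^sub>M \<Theta>) ?f"
    unfolding exp_moment_def moment_op_zphase_unitary[OF lengths] if_P[OF True] ..
  also have "\<dots> = (\<integral>a. (\<integral>\<theta>. ?f (a, \<theta>) \<partial>\<Theta>) \<partial>?A)"
    by (rule integral_fst'[OF \<open>integrable _ ?f\<close>, symmetric])
  also have "\<dots> = (\<integral>a. (if zcharge a u w = 0 then 1 else 0) \<partial>?A)"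
  proof (intro Bochner_Integration.integral_cong refl)
    fix a
    have "\<bar>zcharge a u w\<bar> \<le> real (2 * t)"
      using abs_zcharge_le[of a u w] lengths by simp
    then show "(\<integral>\<theta>. ?f (a, \<theta>) \<partial>\<Theta>) = (if zcharge a u w = 0 then 1 else 0)"
      using int[OF zcharge_Ints] by simp
  qed
  also have "\<dots> = of_real (card {a\<in>?Q. zcharge a u w = 0} / card ?Q)"
    by (simp add: integral_uniform_count_measure_eq_average finite_qubits sum.If_cases Int_def
        scaleR_conv_of_real)
  finally show ?thesis
    using True by simp
qed

lemma exp_moment_haar_diag_unitary:
  assumes in_qubits: "set u \<subseteq> qubits n" "set w \<subseteq> qubits n"
    and lengths: "length u = t" "length w = t" "length u' = t" "length w' = t"
  shows "exp_moment (haar_diag_params n) haar_diag_unitary t (u, w) (u', w') =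
    (if (u, w) = (u', w') then if mset u = mset w then 1 else 0 else 0)"
proof (cases "(u, w) = (u', w')")
  case False
  then show ?thesis
    unfolding exp_moment_def moment_op_haar_diag_unitary[OF in_qubits lengths] if_not_P[OF False] by simp
next
  case True
  let ?T = "\<lambda>_::bool list. uniform_measure lborel {0..2*pi}"
  have T: "circle_design (uniform_measure lborel {0..2*pi}) 0"
    by (rule circle_design_uniform_Icc)
  interpret T: prob_space "uniform_measure lborel {0..2*pi}"
    using T by (simp add: circle_design_def)
  interpret product_sigma_finite ?T
    by (simp add: product_sigma_finite_def T.sigma_finite_measure_axioms)
  have integrable: "integrable (?T x) (\<lambda>\<phi>. cis (\<phi> * count_diff u w x))" for x
    using T by (intro T.integrable_const_bound[where B=1]) (auto simp: circle_design_def)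
  have "exp_moment (haar_diag_params n) haar_diag_unitary t (u, w) (u', w') =
      (\<integral>\<phi>. (\<Prod>x\<in>qubits n. cis (\<phi> x * count_diff u w x)) \<partial>Pi\<^sub>M (qubits n) ?T)"
    unfolding exp_moment_def moment_op_haar_diag_unitary[OF in_qubits lengths] if_P[OF True] haar_diag_params_def ..
  also have "\<dots> = (\<Prod>x\<in>qubits n. (\<integral>\<phi>. cis (\<phi> * count_diff u w x) \<partial>?T x))"
    by (rule product_integral_prod[OF finite_qubits integrable])
  also have "\<dots> = (\<Prod>x\<in>qubits n. if count_diff u w x = 0 then 1 else 0)"
    by (intro prod.cong refl integral_cis_uniform_Icc) (simp add: count_diff_def)
  also have "\<dots> = (if mset u = mset w then 1 else 0)"
    using finite_qubits by (auto simp: mset_eq_iff_count_diff_eq_0[OF in_qubits] intro: prod_zero)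
  finally show ?thesis
    using True by simp
qed

lemma gD_zphase_unitary_le:
  assumes \<Theta>: "circle_design \<Theta> (2 * t)" and t: "1 \<le> t"
  shows "gD n (uniform_count_measure (qubits n) \<Otimes>\<^sub>M \<Theta>) zphase_unitary t \<le> 1 - 1 / (2 * real t)"
  unfolding gD_def
proof (rule op_norm_diag_le)
  let ?Q = "qubits n"
  let ?E = "exp_moment (uniform_count_measure ?Q \<Otimes>\<^sub>M \<Theta>) zphase_unitary t"
  let ?H = "exp_moment (haar_diag_params n) haar_diag_unitary t"
  let ?p = "\<lambda>u w. card {a\<in>?Q. zcharge a u w = 0} / card ?Q"
  have entry: "?E (u, w) (u', w') - ?H (u, w) (u', w') =
      (if (u, w) = (u', w') then of_real (?p u w) - (if mset u = mset w then 1 else 0) else 0)"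
    if "(u, w) \<in> mom_idx n t" "(u', w') \<in> mom_idx n t" for u w u' w'
    using that by (simp add: mom_idx_def tidx_def exp_moment_zphase_unitary[OF \<Theta>] exp_moment_haar_diag_unitary)
  show "finite (mom_idx n t)"
    by (simp add: mom_idx_def finite_tidx finite_qubits)
  show "0 \<le> 1 - 1 / (2 * real t)"
    using t by (simp add: field_simps)
  show "?E r c - ?H r c = 0" if "r \<in> mom_idx n t" "c \<in> mom_idx n t" "r \<noteq> c" for r c
    using that entry by (cases r; cases c) auto
  show "cmod (?E r r - ?H r r) \<le> 1 - 1 / (2 * real t)" if r: "r \<in> mom_idx n t" for r
  proof -
    obtain u w where r_eq: "r = (u, w)" and uw: "set u \<subseteq> ?Q" "set w \<subseteq> ?Q" "length u = t" "length w = t"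
      using r by (auto simp: mom_idx_def tidx_def)
    have r_uw: "(u, w) \<in> mom_idx n t"
      using r r_eq by simp
    show ?thesis
    proof (cases "mset u = mset w")
      case True
      then have "?p u w = 1"
        using finite_qubits qubits_nonempty by (simp add: zcharge_eq_0_if_mset_eq)
      then show ?thesis
        using entry[OF r_uw r_uw] r_eq True t by simp
    next
      case False
      have "?p u w \<le> 1 - 1 / (2 * real t)"
        using zcharge_vanishing_fraction_le[OF uw(1,2) False] uw(3,4) by simp
      then show ?thesis
        using entry[OF r_uw r_uw] r_eq False by (simp add: norm_divide)
    qed
  qed
qed

theorem mainTheorem5:
  fixes n t q :: nat
  assumes "n \<ge> 1" and "t \<ge> 1"
  shows "gD n (nu_params n) zphase_unitary t \<le> 1 - 1 / (2 * real t)
     \<and> (q > 2 * t \<longrightarrow> gD n (nuq_params n q) zphase_unitary t \<le> 1 - 1 / (2 * real t))"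
  unfolding nu_params_def nuq_params_def
  using gD_zphase_unitary_le[OF circle_design_uniform_Ioc assms(2)]
    gD_zphase_unitary_le[OF circle_design_roots_of_unity assms(2)]
  by blast

end
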